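(* Let $n_r \ge 1$ and let $\mathcal{Q}^a \subseteq \mathbb{C}^{n_r}$ be a set of (angular channel) vectors. For $\boldsymbol{v}\in\mathbb{C}^{n_r}$ let its support vector $\boldsymbol{v}_s\in\{0,1\}^{n_r}$ be defined by $v_{s,i}=1$ if $v_i\neq 0$ and $v_{s,i}=0$ if $v_i=0$, and let $\mathcal{Q}^a_s=\{\boldsymbol{q}_s : \boldsymbol{q}\in\mathcal{Q}^a\}\subseteq\{0,1\}^{n_r}$. Assume $\mathcal{Q}^a_s$ satisfies the inclusion property: whenever $\boldsymbol{a}\in\mathcal{Q}^a_s$ and $\boldsymbol{b}\in\{0,1\}^{n_r}$ has its set of nonzero indices contained in that of $\boldsymbol{a}$, then $\boldsymbol{b}\in\mathcal{Q}^a_s$. Let $\boldsymbol{G}\in\{0,1\}^{m\times n_r}$ be a binary matrix such that the linear encoding map $\boldsymbol{s}\mapsto \boldsymbol{G}\boldsymbol{s}$ computed over $\mathbb{F}_2$ is injective on $\mathcal{Q}^a_s$. Regard $\boldsymbol{G}$ as a complex matrix with real entries $0,1$. Then for all $\boldsymbol{q}^a_1,\boldsymbol{q}^a_2\in\mathcal{Q}^a$ we have $\boldsymbol{q}^a_1\neq\boldsymbol{q}^a_2$ if and only if $\boldsymbol{G}\boldsymbol{q}^a_1\neq\boldsymbol{G}\boldsymbol{q}^a_2$.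
   Context: $\mathbb{F}_2$ denotes the field with two elements; a binary linear source code is given by a generator matrix $\boldsymbol{G}$ over $\mathbb{F}_2$, encoding $\boldsymbol{s}$ as $\boldsymbol{G}\boldsymbol{s}$ (mod 2). *)

theory Defs
  imports Complex_Main
begin

text \<open>Vectors of length n are modelled as functions on nat that vanish outside {..<n};
  an m x n matrix as a function nat => nat => _ (row, column).\<close>

definition is_cvec :: "nat \<Rightarrow> (nat \<Rightarrow> complex) \<Rightarrow> bool" where
  "is_cvec n v \<longleftrightarrow> (\<forall>i\<ge>n. v i = 0)"

definition is_bvec :: "nat \<Rightarrow> (nat \<Rightarrow> nat) \<Rightarrow> bool" where
  "is_bvec n b \<longleftrightarrow> (\<forall>i<n. b i \<in> {0,1}) \<and> (\<forall>i\<ge>n. b i = 0)"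

definition is_bmat :: "nat \<Rightarrow> nat \<Rightarrow> (nat \<Rightarrow> nat \<Rightarrow> nat) \<Rightarrow> bool" where
  "is_bmat m n G \<longleftrightarrow> (\<forall>i<m. \<forall>j<n. G i j \<in> {0,1})"

definition supp_vec :: "nat \<Rightarrow> (nat \<Rightarrow> complex) \<Rightarrow> (nat \<Rightarrow> nat)" where
  "supp_vec n v = (\<lambda>i. if i < n \<and> v i \<noteq> 0 then 1 else 0)"

definition inclusion_property :: "nat \<Rightarrow> (nat \<Rightarrow> nat) set \<Rightarrow> bool" where
  "inclusion_property n S \<longleftrightarrow>
     (\<forall>a\<in>S. \<forall>b. is_bvec n b \<and> {i. i < n \<and> b i \<noteq> 0} \<subseteq> {i. i < n \<and> a i \<noteq> 0} \<longrightarrow> b \<in> S)"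

definition enc_F2 :: "nat \<Rightarrow> nat \<Rightarrow> (nat \<Rightarrow> nat \<Rightarrow> nat) \<Rightarrow> (nat \<Rightarrow> nat) \<Rightarrow> (nat \<Rightarrow> nat)" where
  "enc_F2 m n G s = (\<lambda>i. if i < m then (\<Sum>j<n. G i j * s j) mod 2 else 0)"

definition cmat_vec :: "nat \<Rightarrow> nat \<Rightarrow> (nat \<Rightarrow> nat \<Rightarrow> nat) \<Rightarrow> (nat \<Rightarrow> complex) \<Rightarrow> (nat \<Rightarrow> complex)" where
  "cmat_vec m n G q = (\<lambda>i. if i < m then (\<Sum>j<n. of_nat (G i j) * q j) else 0)"

end

theory Submission imports Defs begin

text \<open>Suppose \<open>G q\<^sub>1 = G q\<^sub>2\<close> over \<open>\<complex>\<close> and let \<open>C\<close> be the union of the supports of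
  \<open>q\<^sub>1\<close> and \<open>q\<^sub>2\<close>. The columns of \<open>G\<close> indexed by \<open>C\<close> are linearly independent over \<open>\<bbbF>\<^sub>2\<close>:
  a vanishing \<open>\<bbbF>\<^sub>2\<close>-combination over a set \<open>T \<subseteq> C\<close> splits \<open>T\<close> into a part inside the
  support of \<open>q\<^sub>1\<close> and a part inside the support of \<open>q\<^sub>2\<close>; by the inclusion property both
  parts are support vectors, they have the same \<open>\<bbbF>\<^sub>2\<close>-code, so by injectivity they coincide,
  and being disjoint they are empty. Independence modulo 2 of integer columns implies
  independence in characteristic 0, since fraction-free Gaussian elimination can always pick
  an odd, hence nonzero, pivot; so
  \<open>q\<^sub>1 - q\<^sub>2\<close>, which is supported on \<open>C\<close> and lies in the kernel, vanishes.\<close>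

text \<open>The columns \<open>C\<close> of the integer matrix \<open>A\<close> are linearly independent over \<open>\<bbbF>\<^sub>2\<close>;
  \<open>y\<close> ranges over integer lifts of \<open>\<bbbF>\<^sub>2\<close>-coefficient vectors.\<close>
definition mod2_independent :: "'r set \<Rightarrow> 'c set \<Rightarrow> ('r \<Rightarrow> 'c \<Rightarrow> int) \<Rightarrow> bool" where
  "mod2_independent R C A \<longleftrightarrow>
     (\<forall>y. (\<exists>j\<in>C. odd (y j)) \<longrightarrow> (\<exists>i\<in>R. odd (\<Sum>j\<in>C. A i j * y j)))"

lemma mod2_independent_obtains_odd_pivot:
  assumes "finite F" and "c \<notin> F" and "mod2_independent R (insert c F) A"
  obtains i where "i \<in> R" and "odd (A i c)"
proof -
  obtain i where "i \<in> R" and "odd (\<Sum>j\<in>insert c F. A i j * (if j = c then 1 else 0))"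
    using assms(3)[unfolded mod2_independent_def, rule_format, of "\<lambda>j. if j = c then 1 else 0"]
    by auto
  with assms(1,2) show ?thesis
    using that by (simp add: if_distrib cong: if_cong)
qed

text \<open>Row \<open>r\<close> minus \<open>A r c / A i c\<close> times row \<open>i\<close>, multiplied by \<open>A i c\<close> to stay integral.\<close>
definition eliminate_column :: "('r \<Rightarrow> 'c \<Rightarrow> 'a::comm_ring) \<Rightarrow> 'r \<Rightarrow> 'c \<Rightarrow> 'r \<Rightarrow> 'c \<Rightarrow> 'a" where
  "eliminate_column A i c = (\<lambda>r j. A i c * A r j - A r c * A i j)"

lemma mod2_independent_eliminate_column:
  fixes A :: "'r \<Rightarrow> 'c \<Rightarrow> int"
  assumes "finite F" and "c \<notin> F" and indep: "mod2_independent R (insert c F) A"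
    and pivot: "odd (A i c)"
  shows "mod2_independent R F (eliminate_column A i c)"
  unfolding mod2_independent_def
proof (intro allI impI, rule ccontr)
  fix y :: "'c \<Rightarrow> int"
  assume odd_y: "\<exists>j\<in>F. odd (y j)"
    and all_even: "\<not> (\<exists>r\<in>R. odd (\<Sum>j\<in>F. eliminate_column A i c r j * y j))"
  txt \<open>Choosing \<open>t\<close> as the coefficient of column \<open>c\<close> makes the pivot row even, and any odd
    row of the extended combination then yields an odd row of the eliminated one.\<close>
  define t where "t = (\<Sum>j\<in>F. A i j * y j)"
  have sum_F: "(\<Sum>j\<in>F. B j * (y(c := t)) j) = (\<Sum>j\<in>F. B j * y j)" for B :: "'c \<Rightarrow> int"
    using assms(2) by (intro sum.cong) auto
  have "\<exists>j\<in>insert c F. odd ((y(c := t)) j)"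
    using odd_y assms(2) by auto
  then obtain r where "r \<in> R" and "odd (\<Sum>j\<in>insert c F. A r j * (y(c := t)) j)"
    using indep unfolding mod2_independent_def by blast
  then have odd_r: "odd (A r c * t + (\<Sum>j\<in>F. A r j * y j))"
    using assms(1,2) sum_F by simp
  define s where "s = (\<Sum>j\<in>F. A r j * y j)"
  have "(\<Sum>j\<in>F. eliminate_column A i c r j * y j) = A i c * s - A r c * t"
    unfolding eliminate_column_def s_def t_def
    by (simp add: algebra_simps sum_subtractf sum_distrib_left)
  with all_even \<open>r \<in> R\<close> have "even (A i c * s - A r c * t)"
    by auto
  moreover have "A i c * (A r c * t + s) = (A i c * s - A r c * t) + A r c * t * (A i c + 1)"
    by (simp add: algebra_simps)
  ultimately have "even (A i c * (A r c * t + s))"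
    using pivot by simp
  with pivot odd_r show False
    unfolding s_def by simp
qed

lemma eliminate_column_kernel:
  fixes x :: "'c \<Rightarrow> 'a::comm_ring_1"
  assumes "finite F" and "c \<notin> F"
    and row_r: "(\<Sum>j\<in>insert c F. of_int (A r j) * x j) = 0"
    and row_i: "(\<Sum>j\<in>insert c F. of_int (A i j) * x j) = 0"
  shows "(\<Sum>j\<in>F. of_int (eliminate_column A i c r j) * x j) = 0"
proof -
  have r: "(\<Sum>j\<in>F. of_int (A r j) * x j) = - (of_int (A r c) * x c)"
    using row_r assms(1,2) by (simp add: eq_neg_iff_add_eq_0 add.commute)
  have i: "(\<Sum>j\<in>F. of_int (A i j) * x j) = - (of_int (A i c) * x c)"
    using row_i assms(1,2) by (simp add: eq_neg_iff_add_eq_0 add.commute)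
  have "(\<Sum>j\<in>F. of_int (eliminate_column A i c r j) * x j)
      = of_int (A i c) * (\<Sum>j\<in>F. of_int (A r j) * x j)
        - of_int (A r c) * (\<Sum>j\<in>F. of_int (A i j) * x j)"
    unfolding eliminate_column_def by (simp add: algebra_simps sum_subtractf sum_distrib_left)
  also have "\<dots> = 0"
    unfolding r i by (simp add: algebra_simps)
  finally show ?thesis .
qed

lemma mod2_independent_kernel_trivial:
  fixes x :: "'c \<Rightarrow> 'a::{idom, ring_char_0}"
  assumes "finite C" and "mod2_independent R C A"
    and "\<forall>i\<in>R. (\<Sum>j\<in>C. of_int (A i j) * x j) = 0"
  shows "\<forall>j\<in>C. x j = 0"
  using assms
proof (induction C arbitrary: A rule: finite_induct)
  case empty
  then show ?case by simp
next
  case (insert c F)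
  obtain i where "i \<in> R" and pivot: "odd (A i c)"
    using insert.hyps insert.prems(1) by (rule mod2_independent_obtains_odd_pivot)
  have "\<forall>j\<in>F. x j = 0"
  proof (rule insert.IH)
    show "mod2_independent R F (eliminate_column A i c)"
      using insert.hyps insert.prems(1) pivot by (rule mod2_independent_eliminate_column)
    show "\<forall>r\<in>R. (\<Sum>j\<in>F. of_int (eliminate_column A i c r j) * x j) = 0"
      using insert.hyps insert.prems(2) \<open>i \<in> R\<close> by (simp add: eliminate_column_kernel)
  qed
  moreover have "of_int (A i c) * x c + (\<Sum>j\<in>F. of_int (A i j) * x j) = 0"
    using insert.prems(2) \<open>i \<in> R\<close> insert.hyps by simp
  moreover have "A i c \<noteq> 0"
    using pivot by auto
  ultimately show ?case
    by simp
qed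

definition bvec_of_set :: "nat set \<Rightarrow> nat \<Rightarrow> nat" where
  "bvec_of_set T = (\<lambda>j. if j \<in> T then 1 else 0)"

lemma enc_F2_bvec_of_set:
  assumes "T \<subseteq> {..<n}" and "i < m"
  shows "enc_F2 m n G (bvec_of_set T) i = (\<Sum>j\<in>T. G i j) mod 2"
proof -
  have "(\<Sum>j<n. G i j * bvec_of_set T j) = (\<Sum>j\<in>T. G i j * bvec_of_set T j)"
    using assms(1) by (intro sum.mono_neutral_right) (auto simp: bvec_of_set_def)
  then show ?thesis
    using assms(2) by (simp add: enc_F2_def bvec_of_set_def)
qed

lemma bvec_of_set_in_supports:
  assumes "inclusion_property n (supp_vec n ` Q)" and "q \<in> Q"
    and "T \<subseteq> {j. j < n \<and> q j \<noteq> 0}"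
  shows "bvec_of_set T \<in> supp_vec n ` Q"
proof -
  have "is_bvec n (bvec_of_set T)"
    using assms(3) by (auto simp: is_bvec_def bvec_of_set_def)
  moreover have "{j. j < n \<and> bvec_of_set T j \<noteq> 0} \<subseteq> {j. j < n \<and> supp_vec n q j \<noteq> 0}"
    using assms(3) by (auto simp: bvec_of_set_def supp_vec_def)
  ultimately show ?thesis
    using assms(1,2) unfolding inclusion_property_def by blast
qed

lemma even_sum_restrict_odd_coeffs:
  fixes a y :: "'c \<Rightarrow> int"
  assumes "finite C" and "even (\<Sum>j\<in>C. a j * y j)"
  shows "even (\<Sum>j\<in>{j\<in>C. odd (y j)}. a j)"
proof -
  have "(\<Sum>j\<in>{j\<in>C. odd (y j)}. a j) = (\<Sum>j\<in>C. a j * (if odd (y j) then 1 else 0))"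
    using assms(1) by (simp add: sum.inter_filter[symmetric] if_distrib cong: if_cong)
  also have "\<dots> = (\<Sum>j\<in>C. a j * y j) - (\<Sum>j\<in>C. a j * (y j - (if odd (y j) then 1 else 0)))"
    by (simp add: algebra_simps sum_subtractf)
  finally show ?thesis
    using assms(2) by (simp add: dvd_sum)
qed

lemma support_union_mod2_independent:
  assumes incl: "inclusion_property n (supp_vec n ` Q)"
    and inj: "inj_on (enc_F2 m n G) (supp_vec n ` Q)"
    and "q\<^sub>1 \<in> Q" and "q\<^sub>2 \<in> Q"
  shows "mod2_independent {..<m} {j. j < n \<and> (q\<^sub>1 j \<noteq> 0 \<or> q\<^sub>2 j \<noteq> 0)} (\<lambda>i j. int (G i j))"
  unfolding mod2_independent_def
proof (intro allI impI, rule ccontr)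
  define C where "C = {j. j < n \<and> (q\<^sub>1 j \<noteq> 0 \<or> q\<^sub>2 j \<noteq> 0)}"
  fix y :: "nat \<Rightarrow> int"
  assume odd_y: "\<exists>j\<in>C. odd (y j)"
    and all_even: "\<not> (\<exists>i\<in>{..<m}. odd (\<Sum>j\<in>C. int (G i j) * y j))"
  define T where "T = {j\<in>C. odd (y j)}"
  define T\<^sub>1 where "T\<^sub>1 = {j\<in>T. q\<^sub>1 j \<noteq> 0}"
  define T\<^sub>2 where "T\<^sub>2 = {j\<in>T. q\<^sub>1 j = 0}"
  have T_split: "T = T\<^sub>1 \<union> T\<^sub>2" "T\<^sub>1 \<inter> T\<^sub>2 = {}" "finite T\<^sub>1" "finite T\<^sub>2"
    unfolding T\<^sub>1_def T\<^sub>2_def T_def C_def by auto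
  have T\<^sub>1_supp: "T\<^sub>1 \<subseteq> {j. j < n \<and> q\<^sub>1 j \<noteq> 0}" and T\<^sub>2_supp: "T\<^sub>2 \<subseteq> {j. j < n \<and> q\<^sub>2 j \<noteq> 0}"
    unfolding T\<^sub>1_def T\<^sub>2_def T_def C_def by auto
  have "enc_F2 m n G (bvec_of_set T\<^sub>1) = enc_F2 m n G (bvec_of_set T\<^sub>2)"
  proof
    fix i
    show "enc_F2 m n G (bvec_of_set T\<^sub>1) i = enc_F2 m n G (bvec_of_set T\<^sub>2) i"
    proof (cases "i < m")
      case False
      then show ?thesis by (simp add: enc_F2_def)
    next
      case True
      have "even (\<Sum>j\<in>C. int (G i j) * y j)"
        using all_even True by auto
      then have "even (\<Sum>j\<in>T. int (G i j))"
        unfolding T_def by (rule even_sum_restrict_odd_coeffs[rotated]) (simp add: C_def)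
      then have "even ((\<Sum>j\<in>T\<^sub>1. G i j) + (\<Sum>j\<in>T\<^sub>2. G i j))"
        using T_split by (simp add: sum.union_disjoint flip: of_nat_sum)
      then have "(\<Sum>j\<in>T\<^sub>1. G i j) mod 2 = (\<Sum>j\<in>T\<^sub>2. G i j) mod 2"
        by (metis even_add mod2_eq_if)
      then show ?thesis
        using True T\<^sub>1_supp T\<^sub>2_supp by (simp add: enc_F2_bvec_of_set subset_iff)
    qed
  qed
  moreover have "bvec_of_set T\<^sub>1 \<in> supp_vec n ` Q" "bvec_of_set T\<^sub>2 \<in> supp_vec n ` Q"
    using bvec_of_set_in_supports[OF incl] T\<^sub>1_supp T\<^sub>2_supp assms(3,4) by blast+
  ultimately have "bvec_of_set T\<^sub>1 = bvec_of_set T\<^sub>2"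
    using inj by (auto dest: inj_onD)
  then have "T\<^sub>1 = T\<^sub>2"
    unfolding bvec_of_set_def by (metis one_neq_zero subsetI subset_antisym)
  with T_split odd_y show False
    unfolding T_def by auto
qed

lemma cmat_vec_eq_imp_kernel:
  assumes "cmat_vec m n G q\<^sub>1 = cmat_vec m n G q\<^sub>2" and "i < m"
    and "C \<subseteq> {..<n}" and "\<forall>j\<in>{..<n} - C. q\<^sub>1 j = q\<^sub>2 j"
  shows "(\<Sum>j\<in>C. of_int (int (G i j)) * (q\<^sub>1 j - q\<^sub>2 j)) = 0"
proof -
  have "(\<Sum>j<n. of_nat (G i j) * (q\<^sub>1 j - q\<^sub>2 j)) = 0"
    using fun_cong[OF assms(1), of i] assms(2)
    by (simp add: cmat_vec_def algebra_simps sum_subtractf)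
  moreover have "(\<Sum>j\<in>C. of_nat (G i j) * (q\<^sub>1 j - q\<^sub>2 j)) = (\<Sum>j<n. of_nat (G i j) * (q\<^sub>1 j - q\<^sub>2 j))"
    using assms(3,4) by (intro sum.mono_neutral_left) auto
  ultimately show ?thesis
    by simp
qed

theorem theorem1:
  fixes n m :: nat and Q :: "(nat \<Rightarrow> complex) set" and G :: "nat \<Rightarrow> nat \<Rightarrow> nat"
  assumes "n \<ge> 1"
    and "\<forall>q\<in>Q. is_cvec n q"
    and "inclusion_property n (supp_vec n ` Q)"
    and "is_bmat m n G"
    and "inj_on (enc_F2 m n G) (supp_vec n ` Q)"
    and "q1 \<in> Q" and "q2 \<in> Q"
  shows "q1 \<noteq> q2 \<longleftrightarrow> cmat_vec m n G q1 \<noteq> cmat_vec m n G q2"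
proof
  assume "cmat_vec m n G q1 \<noteq> cmat_vec m n G q2"
  then show "q1 \<noteq> q2" by auto
next
  assume "q1 \<noteq> q2"
  show "cmat_vec m n G q1 \<noteq> cmat_vec m n G q2"
  proof
    assume eq: "cmat_vec m n G q1 = cmat_vec m n G q2"
    define C where "C = {j. j < n \<and> (q1 j \<noteq> 0 \<or> q2 j \<noteq> 0)}"
    have kernel: "\<forall>j\<in>C. q1 j - q2 j = 0"
    proof (rule mod2_independent_kernel_trivial)
      show "finite C" unfolding C_def by simp
      show "mod2_independent {..<m} C (\<lambda>i j. int (G i j))"
        unfolding C_def using support_union_mod2_independent assms(3,5-7) .
      have "C \<subseteq> {..<n}" and "\<forall>j\<in>{..<n} - C. q1 j = q2 j"
        unfolding C_def by auto
      then show "\<forall>i\<in>{..<m}. (\<Sum>j\<in>C. of_int (int (G i j)) * (q1 j - q2 j)) = 0"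
        using cmat_vec_eq_imp_kernel[OF eq] by simp
    qed
    have outside: "q1 j = 0 \<and> q2 j = 0" if "j \<ge> n" for j
      using assms(2,6,7) that unfolding is_cvec_def by blast
    have "q1 j = q2 j" for j
      using kernel outside[of j] unfolding C_def by (cases "j < n") auto
    then have "q1 = q2" by blast
    with \<open>q1 \<noteq> q2\<close> show False by simp
  qed
qed

end
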